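(* The following unital $*$-algebras admit faithful C*-representations: (i) $\mathbb{C}BC$; (ii) $\mathbb{C}S_\infty$.
   Context: For a monoid $S$ with an involution $s\mapsto s^*$ (a map with $(st)^*=t^*s^*$, $s^{**}=s$), the semigroup algebra $\mathbb{C}S$ (with basis $\{\delta_s: s\in S\}$ and product $\delta_s\delta_t=\delta_{st}$) is a unital $*$-algebra with involution $\delta_s^*=\delta_{s^*}$ extended conjugate-linearly. $BC$ is the bicyclic monoid $\langle p,q : pq=e\rangle$ with involution determined by $p^*=q$. $S_\infty$ is the free monoid on the countably infinite set $\{t_n, t_n^*: n\in\mathbb{N}\}$, with involution determined by $t_n\mapsto t_n^*$ (and $t_n^*\mapsto t_n$). A $*$-algebra admits a faithful C*-representation if there is an injective $*$-homomorphism from it into some C*-algebra. *)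

theory Defs
  imports Complex_Main
begin

record 'b cstar =
  cs_carrier :: "'b set"
  cs_zero    :: 'b
  cs_add     :: "'b \<Rightarrow> 'b \<Rightarrow> 'b"
  cs_smult   :: "complex \<Rightarrow> 'b \<Rightarrow> 'b"
  cs_mult    :: "'b \<Rightarrow> 'b \<Rightarrow> 'b"
  cs_star    :: "'b \<Rightarrow> 'b"
  cs_norm    :: "'b \<Rightarrow> real"

definition cs_dist :: "('b, 'c) cstar_scheme \<Rightarrow> 'b \<Rightarrow> 'b \<Rightarrow> real" where
  "cs_dist A x y = cs_norm A (cs_add A x (cs_smult A (-1) y))"

definition cstar_algebra :: "('b, 'c) cstar_scheme \<Rightarrow> bool" where
  "cstar_algebra A \<longleftrightarrow>
     (let C = cs_carrier A; z = cs_zero A; add = cs_add A; sm = cs_smult A;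
          mul = cs_mult A; st = cs_star A; nm = cs_norm A in
     \<comment> \<open>closure\<close>
     z \<in> C \<and>
     (\<forall>x\<in>C. \<forall>y\<in>C. add x y \<in> C \<and> mul x y \<in> C) \<and>
     (\<forall>c. \<forall>x\<in>C. sm c x \<in> C) \<and>
     (\<forall>x\<in>C. st x \<in> C) \<and>
     \<comment> \<open>complex vector space\<close>
     (\<forall>x\<in>C. \<forall>y\<in>C. \<forall>w\<in>C. add (add x y) w = add x (add y w)) \<and>
     (\<forall>x\<in>C. \<forall>y\<in>C. add x y = add y x) \<and>
     (\<forall>x\<in>C. add z x = x) \<and>
     (\<forall>x\<in>C. \<exists>y\<in>C. add x y = z) \<and>
     (\<forall>c. \<forall>x\<in>C. \<forall>y\<in>C. sm c (add x y) = add (sm c x) (sm c y)) \<and>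
     (\<forall>c d. \<forall>x\<in>C. sm (c + d) x = add (sm c x) (sm d x)) \<and>
     (\<forall>c d. \<forall>x\<in>C. sm c (sm d x) = sm (c * d) x) \<and>
     (\<forall>x\<in>C. sm 1 x = x) \<and>
     \<comment> \<open>associative algebra\<close>
     (\<forall>x\<in>C. \<forall>y\<in>C. \<forall>w\<in>C. mul (mul x y) w = mul x (mul y w)) \<and>
     (\<forall>x\<in>C. \<forall>y\<in>C. \<forall>w\<in>C. mul x (add y w) = add (mul x y) (mul x w)) \<and>
     (\<forall>x\<in>C. \<forall>y\<in>C. \<forall>w\<in>C. mul (add x y) w = add (mul x w) (mul y w)) \<and>
     (\<forall>c. \<forall>x\<in>C. \<forall>y\<in>C. mul (sm c x) y = sm c (mul x y) \<and> mul x (sm c y) = sm c (mul x y)) \<and>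
     \<comment> \<open>involution\<close>
     (\<forall>x\<in>C. st (st x) = x) \<and>
     (\<forall>x\<in>C. \<forall>y\<in>C. st (add x y) = add (st x) (st y)) \<and>
     (\<forall>c. \<forall>x\<in>C. st (sm c x) = sm (cnj c) (st x)) \<and>
     (\<forall>x\<in>C. \<forall>y\<in>C. st (mul x y) = mul (st y) (st x)) \<and>
     \<comment> \<open>norm, submultiplicativity, C*-identity\<close>
     (\<forall>x\<in>C. nm x = 0 \<longleftrightarrow> x = z) \<and>
     (\<forall>c. \<forall>x\<in>C. nm (sm c x) = cmod c * nm x) \<and>
     (\<forall>x\<in>C. \<forall>y\<in>C. nm (add x y) \<le> nm x + nm y) \<and>
     (\<forall>x\<in>C. \<forall>y\<in>C. nm (mul x y) \<le> nm x * nm y) \<and>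
     (\<forall>x\<in>C. nm (mul (st x) x) = (nm x)\<^sup>2) \<and>
     \<comment> \<open>completeness\<close>
     (\<forall>X. (\<forall>n. X n \<in> C) \<and>
          (\<forall>e>0. \<exists>N. \<forall>m\<ge>N. \<forall>n\<ge>N. cs_dist A (X m) (X n) < e) \<longrightarrow>
          (\<exists>L\<in>C. (\<lambda>n. cs_dist A (X n) L) \<longlonglongrightarrow> 0)))"

text \<open>Elements of \<open>\<complex>S\<close> are finitely supported functions \<open>S \<Rightarrow> \<complex>\<close>;
  \<open>\<delta>\<^sub>s\<close> is the indicator of \<open>s\<close>.\<close>
definition salg_carrier :: "('a \<Rightarrow> complex) set" where
  "salg_carrier = {f. finite {s. f s \<noteq> 0}}"

definition salg_mult :: "('a \<Rightarrow> 'a \<Rightarrow> 'a) \<Rightarrow> ('a \<Rightarrow> complex) \<Rightarrow> ('a \<Rightarrow> complex) \<Rightarrow> 'a \<Rightarrow> complex" where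
  "salg_mult mul f g u =
     (\<Sum>(s, t) \<in> {(s, t). mul s t = u \<and> f s \<noteq> 0 \<and> g t \<noteq> 0}. f s * g t)"

definition salg_star :: "('a \<Rightarrow> 'a) \<Rightarrow> ('a \<Rightarrow> complex) \<Rightarrow> 'a \<Rightarrow> complex" where
  "salg_star invl f = (\<lambda>s. cnj (f (invl s)))"

type_synonym cs_elem = "(nat \<Rightarrow> complex) \<Rightarrow> (nat \<Rightarrow> complex)"

definition star_hom_into :: "('a \<Rightarrow> 'a \<Rightarrow> 'a) \<Rightarrow> ('a \<Rightarrow> 'a) \<Rightarrow> ('b, 'c) cstar_scheme
    \<Rightarrow> (('a \<Rightarrow> complex) \<Rightarrow> 'b) \<Rightarrow> bool" where
  "star_hom_into mul invl A \<pi> \<longleftrightarrow>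
     (\<forall>f\<in>salg_carrier. \<pi> f \<in> cs_carrier A) \<and>
     (\<forall>f\<in>salg_carrier. \<forall>g\<in>salg_carrier. \<pi> (\<lambda>s. f s + g s) = cs_add A (\<pi> f) (\<pi> g)) \<and>
     (\<forall>c. \<forall>f\<in>salg_carrier. \<pi> (\<lambda>s. c * f s) = cs_smult A c (\<pi> f)) \<and>
     (\<forall>f\<in>salg_carrier. \<forall>g\<in>salg_carrier. \<pi> (salg_mult mul f g) = cs_mult A (\<pi> f) (\<pi> g)) \<and>
     (\<forall>f\<in>salg_carrier. \<pi> (salg_star invl f) = cs_star A (\<pi> f))"

definition has_faithful_cstar_rep :: "('a \<Rightarrow> 'a \<Rightarrow> 'a) \<Rightarrow> ('a \<Rightarrow> 'a) \<Rightarrow> bool" where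
  "has_faithful_cstar_rep mul invl \<longleftrightarrow>
     (\<exists>(A :: cs_elem cstar) \<pi>. cstar_algebra A \<and> star_hom_into mul invl A \<pi> \<and>
        inj_on \<pi> salg_carrier)"

text \<open>Normal form: \<open>(m, n)\<close> stands for \<open>q\<^sup>m p\<^sup>n\<close> in \<open>\<langle>p, q | pq = e\<rangle>\<close>; \<open>e = (0,0)\<close>,
  \<open>p = (0,1)\<close>, \<open>q = (1,0)\<close>.  Using \<open>p\<^sup>b q\<^sup>c = q\<^sup>(c - min b c) p\<^sup>(b - min b c)\<close>.\<close>
definition bc_mult :: "nat \<times> nat \<Rightarrow> nat \<times> nat \<Rightarrow> nat \<times> nat" where
  "bc_mult x y = (case x of (a, b) \<Rightarrow> case y of (c, d) \<Rightarrow>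
      (a + c - min b c, b + d - min b c))"

text \<open>\<open>(q\<^sup>m p\<^sup>n)\<^sup>* = q\<^sup>n p\<^sup>m\<close>, determined by \<open>p\<^sup>* = q\<close>.\<close>
definition bc_star :: "nat \<times> nat \<Rightarrow> nat \<times> nat" where
  "bc_star x = (case x of (m, n) \<Rightarrow> (n, m))"

text \<open>Words over the letters \<open>t\<^sub>n = (n, False)\<close>, \<open>t\<^sub>n\<^sup>* = (n, True)\<close>; product is
  concatenation, involution reverses the word and stars each letter.\<close>
definition sinf_mult :: "(nat \<times> bool) list \<Rightarrow> (nat \<times> bool) list \<Rightarrow> (nat \<times> bool) list" where
  "sinf_mult u v = u @ v"

definition sinf_star :: "(nat \<times> bool) list \<Rightarrow> (nat \<times> bool) list" where
  "sinf_star u = rev (map (\<lambda>(n, b). (n, \<not> b)) u)"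

end

theory Submission
  imports Defs "HOL-Analysis.Analysis"
begin

text \<open>Both monoids act on \<open>\<ell>\<^sup>2(\<nat>)\<close> by adjointable operators: the bicyclic monoid through
  the unilateral shift and its adjoint, \<open>S\<^sub>\<infinity>\<close> on the full Fock space over the letters,
  \<open>t\<^sub>n\<close> acting as creation of \<open>t\<^sub>n\<close> plus annihilation of \<open>t\<^sub>n\<^sup>*\<close>.  Linear extension gives
  a *-homomorphism of the semigroup algebra into the C*-algebra of adjointable operators.
  It is injective because the operators of the monoid elements are linearly independent: in
  every finite family one member is singled out by a single matrix coefficient.  For the
  bicyclic monoid take \<open>q\<^sup>m p\<^sup>n\<close> with \<open>m\<close> minimal and the \<open>m\<close>-th coordinate of its image
  of \<open>e\<^sub>n\<close>; for \<open>S\<^sub>\<infinity>\<close> take a longest word \<open>w\<close> and the coefficient of \<open>e\<^sub>w\<close> in the image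
  of the vacuum.\<close>

section \<open>The Hilbert space \<open>\<ell>\<^sup>2(\<nat>)\<close>\<close>

typedef ell2 = "{x :: nat \<Rightarrow> complex. summable (\<lambda>i. (norm (x i))\<^sup>2)}"
  morphisms Rep_ell2 Abs_ell2
  by (intro exI[of _ "\<lambda>_. 0"]) simp

lemma summable_Rep_ell2: "summable (\<lambda>i. (norm (Rep_ell2 x i))\<^sup>2)"
  using Rep_ell2[of x] by simp

lemma ell2_eqI: "(\<And>i. Rep_ell2 x i = Rep_ell2 y i) \<Longrightarrow> x = y"
  by (metis Rep_ell2_inject ext)

lemma norm_add_sq_le: "(norm ((a::complex) + b))\<^sup>2 \<le> 2 * (norm a)\<^sup>2 + 2 * (norm b)\<^sup>2"
proof -
  have "(norm (a + b))\<^sup>2 \<le> (norm a + norm b)\<^sup>2"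
    by (simp add: power_mono norm_triangle_ineq)
  also have "\<dots> \<le> 2 * (norm a)\<^sup>2 + 2 * (norm b)\<^sup>2"
    using sum_squares_bound[of "norm a" "norm b"] by (simp add: power2_sum)
  finally show ?thesis .
qed

lemma abs_inner_le_norm_sq_add: "\<bar>inner (a::complex) b\<bar> \<le> (norm a)\<^sup>2 + (norm b)\<^sup>2"
proof -
  have "\<bar>inner a b\<bar> \<le> norm a * norm b" by (rule Cauchy_Schwarz_ineq2)
  also have "\<dots> \<le> (norm a)\<^sup>2 + (norm b)\<^sup>2"
    using sum_squares_bound[of "norm a" "norm b"]
      mult_nonneg_nonneg[OF norm_ge_zero norm_ge_zero, of a b]
    unfolding mult.assoc by linarith
  finally show ?thesis .
qed

lemma summable_norm_sq_add:
  assumes "summable (\<lambda>i. (norm ((x::nat\<Rightarrow>complex) i))\<^sup>2)" "summable (\<lambda>i. (norm (y i))\<^sup>2)"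
  shows "summable (\<lambda>i. (norm (x i + y i))\<^sup>2)"
proof (rule summable_comparison_test'[where N=0])
  show "summable (\<lambda>i. 2 * (norm (x i))\<^sup>2 + 2 * (norm (y i))\<^sup>2)"
    using assms by (intro summable_add summable_mult)
qed (use norm_add_sq_le in simp)

lemma summable_norm_sq_mult:
  assumes "summable (\<lambda>i. (norm ((x::nat\<Rightarrow>complex) i))\<^sup>2)"
  shows "summable (\<lambda>i. (norm (c * x i))\<^sup>2)"
  using summable_mult[OF assms, of "(norm c)\<^sup>2"] by (simp add: norm_mult power_mult_distrib)

lemma summable_norm_inner_Rep_ell2:
  "summable (\<lambda>i. norm (inner (Rep_ell2 x i) (Rep_ell2 y i)))"
proof (rule summable_comparison_test'[where N=0])
  show "summable (\<lambda>i. (norm (Rep_ell2 x i))\<^sup>2 + (norm (Rep_ell2 y i))\<^sup>2)"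
    by (intro summable_add summable_Rep_ell2)
qed (use abs_inner_le_norm_sq_add in simp)

lemma summable_inner_Rep_ell2: "summable (\<lambda>i. inner (Rep_ell2 x i) (Rep_ell2 y i))"
  by (rule summable_norm_cancel[OF summable_norm_inner_Rep_ell2])

instantiation ell2 :: real_inner
begin

definition "0 = Abs_ell2 (\<lambda>i. 0)"
definition "x + y = Abs_ell2 (\<lambda>i. Rep_ell2 x i + Rep_ell2 y i)"
definition "- x = Abs_ell2 (\<lambda>i. - Rep_ell2 x i)"
definition "x - y = Abs_ell2 (\<lambda>i. Rep_ell2 x i - Rep_ell2 y i)"
definition "scaleR r x = Abs_ell2 (\<lambda>i. complex_of_real r * Rep_ell2 x i)"
definition "inner x y = (\<Sum>i. inner (Rep_ell2 x i) (Rep_ell2 y i))"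
definition "norm (x::ell2) = sqrt (inner x x)"
definition "sgn (x::ell2) = scaleR (inverse (norm x)) x"
definition "dist (x::ell2) y = norm (x - y)"
definition "(uniformity :: (ell2 \<times> ell2) filter) =
  (INF e\<in>{0 <..}. principal {(x, y). dist x y < e})"
definition "open (U :: ell2 set) = (\<forall>x\<in>U. \<forall>\<^sub>F (x', y) in uniformity. x' = x \<longrightarrow> y \<in> U)"

lemma Rep_ell2_zero[simp]: "Rep_ell2 0 = (\<lambda>i. 0)"
  by (simp add: zero_ell2_def Abs_ell2_inverse)

lemma Rep_ell2_plus[simp]: "Rep_ell2 (x + y) = (\<lambda>i. Rep_ell2 x i + Rep_ell2 y i)"
  by (simp add: plus_ell2_def Abs_ell2_inverse summable_norm_sq_add summable_Rep_ell2)

lemma Rep_ell2_uminus[simp]: "Rep_ell2 (- x) = (\<lambda>i. - Rep_ell2 x i)"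
  using summable_norm_sq_mult[OF summable_Rep_ell2, of "-1" x]
  by (simp add: uminus_ell2_def Abs_ell2_inverse)

lemma Rep_ell2_minus[simp]: "Rep_ell2 (x - y) = (\<lambda>i. Rep_ell2 x i - Rep_ell2 y i)"
  using summable_norm_sq_add[OF summable_Rep_ell2
      summable_norm_sq_mult[OF summable_Rep_ell2, of "-1" y], of x]
  by (simp add: minus_ell2_def Abs_ell2_inverse)

lemma Rep_ell2_scaleR[simp]: "Rep_ell2 (scaleR r x) = (\<lambda>i. complex_of_real r * Rep_ell2 x i)"
  by (simp add: scaleR_ell2_def Abs_ell2_inverse summable_norm_sq_mult summable_Rep_ell2)

instance
proof
  fix x y z :: ell2 and a b :: real
  show "x + y + z = x + (y + z)" by (rule ell2_eqI) (simp add: algebra_simps)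
  show "x + y = y + x" by (rule ell2_eqI) (simp add: algebra_simps)
  show "0 + x = x" by (rule ell2_eqI) simp
  show "- x + x = 0" by (rule ell2_eqI) simp
  show "x - y = x + - y" by (rule ell2_eqI) simp
  show "a *\<^sub>R (x + y) = a *\<^sub>R x + a *\<^sub>R y" by (rule ell2_eqI) (simp add: algebra_simps)
  show "(a + b) *\<^sub>R x = a *\<^sub>R x + b *\<^sub>R x" by (rule ell2_eqI) (simp add: algebra_simps)
  show "a *\<^sub>R b *\<^sub>R x = (a * b) *\<^sub>R x" by (rule ell2_eqI) (simp add: algebra_simps)
  show "1 *\<^sub>R x = x" by (rule ell2_eqI) simp
  show "sgn x = inverse (norm x) *\<^sub>R x" by (simp add: sgn_ell2_def)
  show "dist x y = norm (x - y)" by (simp add: dist_ell2_def)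
  show "(uniformity :: (ell2 \<times> ell2) filter) = (INF e\<in>{0 <..}. principal {(x, y). dist x y < e})"
    by (simp add: uniformity_ell2_def)
  show "open U = (\<forall>x\<in>U. \<forall>\<^sub>F (x', y) in uniformity. x' = x \<longrightarrow> y \<in> U)" for U :: "ell2 set"
    by (simp add: open_ell2_def)
  show "inner x y = inner y x" by (simp add: inner_ell2_def inner_commute)
  show "inner (x + y) z = inner x z + inner y z"
    using suminf_add[OF summable_inner_Rep_ell2[of x z] summable_inner_Rep_ell2[of y z]]
    by (simp add: inner_ell2_def inner_add_left)
  have "inner (complex_of_real a * u) v = a * inner u v" for u v
    by (simp add: inner_complex_def algebra_simps)
  then show "inner (a *\<^sub>R x) y = a * inner x y"
    using suminf_mult[OF summable_inner_Rep_ell2[of x y], of a] by (simp add: inner_ell2_def)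
  have nonneg: "0 \<le> inner (Rep_ell2 x i) (Rep_ell2 x i)" for i by simp
  show "0 \<le> inner x x" unfolding inner_ell2_def
    by (rule suminf_nonneg[OF summable_inner_Rep_ell2 nonneg])
  show "inner x x = 0 \<longleftrightarrow> x = 0"
  proof
    assume "inner x x = 0"
    then have "\<And>i. inner (Rep_ell2 x i) (Rep_ell2 x i) = 0"
      using suminf_eq_zero_iff[OF summable_inner_Rep_ell2 nonneg] by (simp add: inner_ell2_def)
    then show "x = 0" by (intro ell2_eqI) simp
  qed (simp add: inner_ell2_def)
  show "norm x = sqrt (inner x x)" by (simp add: norm_ell2_def)
qed

end

lemma power2_norm_ell2: "(norm x)\<^sup>2 = (\<Sum>i. (norm (Rep_ell2 x i))\<^sup>2)"
  unfolding power2_norm_eq_inner inner_ell2_def ..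

lemma has_sum_inner_ell2: "((\<lambda>i. inner (Rep_ell2 x i) (Rep_ell2 y i)) has_sum inner x y) UNIV"
  unfolding inner_ell2_def
  by (rule norm_summable_imp_has_sum[OF summable_norm_inner_Rep_ell2
        summable_sums[OF summable_inner_Rep_ell2]])

lemma sum_norm_sq_le_power2_norm: "(\<Sum>i\<in>I. (norm (Rep_ell2 x i))\<^sup>2) \<le> (norm x)\<^sup>2"
  if "finite I"
  unfolding power2_norm_ell2 by (rule sum_le_suminf[OF summable_Rep_ell2 that]) auto

lemma norm_Rep_ell2_le: "norm (Rep_ell2 x i) \<le> norm x"
  by (rule power2_le_imp_le) (use sum_norm_sq_le_power2_norm[of "{i}" x] in simp_all)

lemma Rep_ell2_sum: "Rep_ell2 (sum f A) = (\<lambda>i. \<Sum>a\<in>A. Rep_ell2 (f a) i)"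
  by (induction A rule: infinite_finite_induct) auto

definition ell2_basis :: "nat \<Rightarrow> ell2" where
  "ell2_basis k = Abs_ell2 (\<lambda>i. if i = k then 1 else 0)"

lemma Rep_ell2_basis: "Rep_ell2 (ell2_basis k) = (\<lambda>i. if i = k then 1 else 0)"
  unfolding ell2_basis_def
  by (rule Abs_ell2_inverse, simp, rule summable_finite[of "{k}"]) auto

lemma Cauchy_Rep_ell2:
  assumes "Cauchy X"
  shows "Cauchy (\<lambda>n. Rep_ell2 (X n) i)"
  unfolding Cauchy_iff
proof (intro allI impI)
  fix e :: real assume "e > 0"
  then obtain N where "\<forall>m\<ge>N. \<forall>n\<ge>N. norm (X m - X n) < e"
    using assms by (auto simp: Cauchy_iff)
  then show "\<exists>N. \<forall>m\<ge>N. \<forall>n\<ge>N. norm (Rep_ell2 (X m) i - Rep_ell2 (X n) i) < e"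
    using norm_Rep_ell2_le[of "X _ - X _" i] by (metis Rep_ell2_minus le_less_trans)
qed

lemma sum_norm_sq_diff_lim_le:
  assumes lim: "\<And>i. (\<lambda>m. Rep_ell2 (X m) i) \<longlonglongrightarrow> L i"
    and close: "\<And>m. m \<ge> N \<Longrightarrow> norm (x - X m) \<le> e" and "finite I"
  shows "(\<Sum>i\<in>I. (norm (Rep_ell2 x i - L i))\<^sup>2) \<le> e\<^sup>2"
proof (rule LIMSEQ_le_const2)
  show "(\<lambda>m. \<Sum>i\<in>I. (norm (Rep_ell2 x i - Rep_ell2 (X m) i))\<^sup>2)
          \<longlonglongrightarrow> (\<Sum>i\<in>I. (norm (Rep_ell2 x i - L i))\<^sup>2)"
    by (intro tendsto_intros lim)
  have "(\<Sum>i\<in>I. (norm (Rep_ell2 x i - Rep_ell2 (X m) i))\<^sup>2) \<le> e\<^sup>2" if "m \<ge> N" for m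
  proof -
    have "(\<Sum>i\<in>I. (norm (Rep_ell2 x i - Rep_ell2 (X m) i))\<^sup>2) \<le> (norm (x - X m))\<^sup>2"
      using sum_norm_sq_le_power2_norm[OF \<open>finite I\<close>, of "x - X m"] by simp
    also have "\<dots> \<le> e\<^sup>2"
      using close[OF that] by (intro power_mono) simp_all
    finally show ?thesis .
  qed
  then show "\<exists>N. \<forall>m\<ge>N. (\<Sum>i\<in>I. (norm (Rep_ell2 x i - Rep_ell2 (X m) i))\<^sup>2) \<le> e\<^sup>2"
    by blast
qed

lemma Cauchy_ell2_tail_bound:
  assumes "Cauchy X" and lim: "\<And>i. (\<lambda>n. Rep_ell2 (X n) i) \<longlonglongrightarrow> L i" and "e > 0"
  shows "\<exists>N. \<forall>n\<ge>N. summable (\<lambda>i. (norm (Rep_ell2 (X n) i - L i))\<^sup>2) \<and>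
                    (\<Sum>i. (norm (Rep_ell2 (X n) i - L i))\<^sup>2) \<le> e\<^sup>2"
proof -
  obtain N where N: "\<forall>m\<ge>N. \<forall>n\<ge>N. norm (X m - X n) < e"
    using assms by (auto simp: Cauchy_iff)
  have "summable (\<lambda>i. (norm (Rep_ell2 (X n) i - L i))\<^sup>2) \<and>
        (\<Sum>i. (norm (Rep_ell2 (X n) i - L i))\<^sup>2) \<le> e\<^sup>2" if "n \<ge> N" for n
  proof -
    have partial: "(\<Sum>i<K. (norm (Rep_ell2 (X n) i - L i))\<^sup>2) \<le> e\<^sup>2" for K
      using N that by (intro sum_norm_sq_diff_lim_le[OF lim, of N]) (auto intro: less_imp_le)
    have "summable (\<lambda>i. (norm (Rep_ell2 (X n) i - L i))\<^sup>2)"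
      by (rule summableI_nonneg_bounded[OF _ partial]) simp
    then show ?thesis using suminf_le_const[OF _ partial] by blast
  qed
  then show ?thesis by blast
qed

instance ell2 :: complete_space
proof
  fix X :: "nat \<Rightarrow> ell2" assume "Cauchy X"
  have "\<forall>i. \<exists>l. (\<lambda>n. Rep_ell2 (X n) i) \<longlonglongrightarrow> l"
    using Cauchy_Rep_ell2[OF \<open>Cauchy X\<close>] by (simp add: Cauchy_convergent_iff convergent_def)
  then obtain L where lim: "\<And>i. (\<lambda>n. Rep_ell2 (X n) i) \<longlonglongrightarrow> L i"
    by metis
  obtain N0 where "summable (\<lambda>i. (norm (Rep_ell2 (X N0) i - L i))\<^sup>2)"
    using Cauchy_ell2_tail_bound[OF \<open>Cauchy X\<close> lim, of 1] by auto
  then have "summable (\<lambda>i. (norm (Rep_ell2 (X N0) i + (-1) * (Rep_ell2 (X N0) i - L i)))\<^sup>2)"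
    by (intro summable_norm_sq_add summable_Rep_ell2 summable_norm_sq_mult)
  then have Rep_L: "Rep_ell2 (Abs_ell2 L) = L"
    by (simp add: Abs_ell2_inverse)
  have "X \<longlonglongrightarrow> Abs_ell2 L"
  proof (rule LIMSEQ_I)
    fix r :: real assume "r > 0"
    then obtain N where N: "\<And>n. n \<ge> N \<Longrightarrow> (\<Sum>i. (norm (Rep_ell2 (X n) i - L i))\<^sup>2) \<le> (r/2)\<^sup>2"
      using Cauchy_ell2_tail_bound[OF \<open>Cauchy X\<close> lim, of "r/2"] by auto
    have "norm (X n - Abs_ell2 L) < r" if "n \<ge> N" for n
    proof -
      have "(norm (X n - Abs_ell2 L))\<^sup>2 \<le> (r/2)\<^sup>2"
        using N[OF that] by (simp add: power2_norm_ell2 Rep_L)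
      also have "\<dots> < r\<^sup>2" using \<open>r > 0\<close> by (simp add: power_strict_mono)
      finally show ?thesis
        by (rule power2_less_imp_less) (use \<open>r > 0\<close> in simp)
    qed
    then show "\<exists>N. \<forall>n\<ge>N. norm (X n - Abs_ell2 L) < r" by blast
  qed
  then show "convergent X" by (rule convergentI)
qed

instance ell2 :: banach ..

section \<open>Adjointable operators on \<open>\<ell>\<^sup>2(\<nat>)\<close>\<close>

text \<open>\<open>ell2\<close> is only a real inner product space, so complex scalar multiplication,
  complex linearity and adjoints are introduced by hand.\<close>

definition cscale :: "complex \<Rightarrow> ell2 \<Rightarrow> ell2" where
  "cscale c x = Abs_ell2 (\<lambda>i. c * Rep_ell2 x i)"

lemma Rep_ell2_cscale[simp]: "Rep_ell2 (cscale c x) = (\<lambda>i. c * Rep_ell2 x i)"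
  by (simp add: cscale_def Abs_ell2_inverse summable_norm_sq_mult summable_Rep_ell2)

lemma cscale_cscale: "cscale c (cscale d x) = cscale (c * d) x"
  by (rule ell2_eqI) (simp add: algebra_simps)

lemma norm_cscale: "norm (cscale c x) = cmod c * norm x"
proof -
  have "(norm (cscale c x))\<^sup>2 = (\<Sum>i. (cmod c)\<^sup>2 * (norm (Rep_ell2 x i))\<^sup>2)"
    by (simp add: power2_norm_ell2 norm_mult power_mult_distrib)
  also have "\<dots> = (cmod c * norm x)\<^sup>2"
    by (simp add: suminf_mult summable_Rep_ell2 power2_norm_ell2 power_mult_distrib)
  finally show ?thesis by (simp add: power2_eq_iff_nonneg)
qed

lemma cscale_add: "cscale c (x + y) = cscale c x + cscale c y"
  and cscale_diff: "cscale c (x - y) = cscale c x - cscale c y"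
  by (auto intro: ell2_eqI simp: algebra_simps)

lemma bounded_linear_cscale: "bounded_linear (cscale c)"
proof (rule bounded_linear_intro[where K = "cmod c"])
  show "cscale c (x + y) = cscale c x + cscale c y" for x y
    by (rule cscale_add)
  show "cscale c (r *\<^sub>R x) = r *\<^sub>R cscale c x" for r x
    by (rule ell2_eqI) (simp add: algebra_simps)
qed (simp add: norm_cscale)

lemma inner_cscale_left: "inner (cscale c x) y = inner x (cscale (cnj c) y)"
proof -
  have "inner (c * z) w = inner z (cnj c * w)" for z w :: complex
    by (simp add: inner_complex_def algebra_simps)
  then show ?thesis by (simp add: inner_ell2_def)
qed

lemma inner_right_cancel: "(\<And>x. inner x u = inner x v) \<Longrightarrow> u = (v::ell2)"
  by (metis inner_diff_right inner_eq_zero_iff right_minus_eq)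

type_synonym ell2_op = "ell2 \<Rightarrow>\<^sub>L ell2"

definition cscale_op :: "complex \<Rightarrow> ell2_op" where
  "cscale_op c = Blinfun (cscale c)"

lemma cscale_op_apply[simp]: "blinfun_apply (cscale_op c) x = cscale c x"
  by (simp add: cscale_op_def bounded_linear_Blinfun_apply bounded_linear_cscale)

definition op_smult :: "complex \<Rightarrow> ell2_op \<Rightarrow> ell2_op" where
  "op_smult c T = cscale_op c o\<^sub>L T"

definition complex_linear :: "ell2_op \<Rightarrow> bool" where
  "complex_linear T \<longleftrightarrow> (\<forall>c x. T (cscale c x) = cscale c (T x))"

definition is_adjoint :: "ell2_op \<Rightarrow> ell2_op \<Rightarrow> bool" where
  "is_adjoint T S \<longleftrightarrow> (\<forall>x y. inner (T x) y = inner x (S y))"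

definition adjointable :: "ell2_op set" where
  "adjointable = {T. complex_linear T \<and> (\<exists>S. is_adjoint T S)}"

definition op_adjoint :: "ell2_op \<Rightarrow> ell2_op" where
  "op_adjoint T = (SOME S. is_adjoint T S)"

lemma is_adjoint_unique: "is_adjoint T S \<Longrightarrow> is_adjoint T S' \<Longrightarrow> S = S'"
  unfolding is_adjoint_def by (intro blinfun_eqI inner_right_cancel) metis

lemma is_adjoint_sym: "is_adjoint T S \<Longrightarrow> is_adjoint S T"
  unfolding is_adjoint_def by (metis inner_commute)

lemma is_adjoint_op_adjoint: "T \<in> adjointable \<Longrightarrow> is_adjoint T (op_adjoint T)"
  unfolding adjointable_def op_adjoint_def by (auto intro: someI)

lemma op_adjoint_eqI: "is_adjoint T S \<Longrightarrow> op_adjoint T = S"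
  unfolding op_adjoint_def by (metis someI is_adjoint_unique)

lemma inner_op_adjoint: "T \<in> adjointable \<Longrightarrow> inner (T x) y = inner x (op_adjoint T y)"
  using is_adjoint_op_adjoint unfolding is_adjoint_def by blast

lemma adjointable_apply_cscale: "T \<in> adjointable \<Longrightarrow> T (cscale c x) = cscale c (T x)"
  unfolding adjointable_def complex_linear_def by blast

lemma complex_linear_adjoint:
  assumes "is_adjoint T S" "complex_linear T"
  shows "complex_linear S"
  unfolding complex_linear_def
proof (intro allI)
  fix c y
  show "S (cscale c y) = cscale c (S y)"
  proof (rule inner_right_cancel)
    fix x
    have "inner x (S (cscale c y)) = inner (T (cscale (cnj c) x)) y"
      using assms by (simp add: is_adjoint_def complex_linear_def inner_cscale_left)
    also have "\<dots> = inner x (cscale c (S y))"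
      using assms(1) by (simp add: is_adjoint_def inner_cscale_left)
    finally show "inner x (S (cscale c y)) = inner x (cscale c (S y))" .
  qed
qed

lemma op_adjoint_adjointable: "T \<in> adjointable \<Longrightarrow> op_adjoint T \<in> adjointable"
  using is_adjoint_op_adjoint complex_linear_adjoint is_adjoint_sym
  unfolding adjointable_def by blast

lemma op_adjoint_op_adjoint: "T \<in> adjointable \<Longrightarrow> op_adjoint (op_adjoint T) = T"
  using is_adjoint_op_adjoint is_adjoint_sym op_adjoint_eqI by blast

lemma is_adjoint_add: "is_adjoint T S \<Longrightarrow> is_adjoint U V \<Longrightarrow> is_adjoint (T + U) (S + V)"
  by (simp add: is_adjoint_def blinfun.add_left inner_add_left inner_add_right)

lemma is_adjoint_diff: "is_adjoint T S \<Longrightarrow> is_adjoint U V \<Longrightarrow> is_adjoint (T - U) (S - V)"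
  by (simp add: is_adjoint_def blinfun.diff_left inner_diff_left inner_diff_right)

lemma is_adjoint_compose: "is_adjoint T S \<Longrightarrow> is_adjoint U V \<Longrightarrow> is_adjoint (T o\<^sub>L U) (V o\<^sub>L S)"
  by (simp add: is_adjoint_def)

lemma is_adjoint_cscale_op: "is_adjoint (cscale_op c) (cscale_op (cnj c))"
  by (simp add: is_adjoint_def inner_cscale_left)

lemma complex_linear_add: "complex_linear T \<Longrightarrow> complex_linear U \<Longrightarrow> complex_linear (T + U)"
  by (simp add: complex_linear_def blinfun.add_left cscale_add)

lemma complex_linear_diff: "complex_linear T \<Longrightarrow> complex_linear U \<Longrightarrow> complex_linear (T - U)"
  by (simp add: complex_linear_def blinfun.diff_left cscale_diff)

lemma adjointable_add: "T \<in> adjointable \<Longrightarrow> U \<in> adjointable \<Longrightarrow> T + U \<in> adjointable"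
  unfolding adjointable_def using complex_linear_add is_adjoint_add by blast

lemma adjointable_diff: "T \<in> adjointable \<Longrightarrow> U \<in> adjointable \<Longrightarrow> T - U \<in> adjointable"
  unfolding adjointable_def using complex_linear_diff is_adjoint_diff by blast

lemma adjointable_compose: "T \<in> adjointable \<Longrightarrow> U \<in> adjointable \<Longrightarrow> T o\<^sub>L U \<in> adjointable"
  unfolding adjointable_def complex_linear_def by (auto intro: is_adjoint_compose)

lemma adjointable_cscale_op: "cscale_op c \<in> adjointable"
  unfolding adjointable_def complex_linear_def using is_adjoint_cscale_op
  by (auto simp: cscale_cscale mult.commute)

lemma adjointable_id: "id_blinfun \<in> adjointable"
  unfolding adjointable_def complex_linear_def is_adjoint_def
  by (auto intro!: exI[of _ id_blinfun])

lemma adjointable_zero: "0 \<in> adjointable"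
  unfolding adjointable_def complex_linear_def is_adjoint_def
  by (auto intro!: exI[of _ 0] ell2_eqI)

lemma adjointable_sum: "(\<And>s. s \<in> F \<Longrightarrow> g s \<in> adjointable) \<Longrightarrow> sum g F \<in> adjointable"
  by (induction F rule: infinite_finite_induct) (auto simp: adjointable_zero adjointable_add)

lemma op_adjoint_add:
  "T \<in> adjointable \<Longrightarrow> U \<in> adjointable \<Longrightarrow> op_adjoint (T + U) = op_adjoint T + op_adjoint U"
  by (intro op_adjoint_eqI is_adjoint_add is_adjoint_op_adjoint)

lemma op_adjoint_diff:
  "T \<in> adjointable \<Longrightarrow> U \<in> adjointable \<Longrightarrow> op_adjoint (T - U) = op_adjoint T - op_adjoint U"
  by (intro op_adjoint_eqI is_adjoint_diff is_adjoint_op_adjoint)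

lemma op_adjoint_compose:
  "T \<in> adjointable \<Longrightarrow> U \<in> adjointable \<Longrightarrow> op_adjoint (T o\<^sub>L U) = op_adjoint U o\<^sub>L op_adjoint T"
  by (intro op_adjoint_eqI is_adjoint_compose is_adjoint_op_adjoint)

lemma op_adjoint_cscale_op: "op_adjoint (cscale_op c) = cscale_op (cnj c)"
  by (intro op_adjoint_eqI is_adjoint_cscale_op)

lemma op_adjoint_id: "op_adjoint id_blinfun = id_blinfun"
  by (intro op_adjoint_eqI) (simp add: is_adjoint_def)

lemma op_adjoint_sum:
  "(\<And>s. s \<in> F \<Longrightarrow> g s \<in> adjointable) \<Longrightarrow> op_adjoint (sum g F) = (\<Sum>s\<in>F. op_adjoint (g s))"
proof (induction F rule: infinite_finite_induct)
  case (insert x F)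
  then show ?case by (simp add: op_adjoint_add adjointable_sum)
qed (auto intro: op_adjoint_eqI simp: is_adjoint_def)

interpretation blinfun_compose: bounded_bilinear blinfun_compose
  by (rule bounded_bilinear_blinfun_compose)

lemma blinfun_compose_assoc: "(T o\<^sub>L U) o\<^sub>L V = T o\<^sub>L (U o\<^sub>L V)"
  by (rule blinfun_eqI) simp

lemma blinfun_compose_id_left[simp]: "id_blinfun o\<^sub>L T = T"
  and blinfun_compose_id_right[simp]: "T o\<^sub>L id_blinfun = T"
  by (auto intro: blinfun_eqI)

lemma cscale_op_add: "cscale_op (c + d) = cscale_op c + cscale_op d"
  by (intro blinfun_eqI ell2_eqI) (simp add: blinfun.add_left algebra_simps)

lemma cscale_op_compose: "cscale_op c o\<^sub>L cscale_op d = cscale_op (c * d)"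
  by (rule blinfun_eqI) (simp add: cscale_cscale)

lemma compose_cscale_op_commute:
  "T \<in> adjointable \<Longrightarrow> T o\<^sub>L cscale_op c = cscale_op c o\<^sub>L T"
  by (rule blinfun_eqI) (simp add: adjointable_apply_cscale)

lemma op_smult_one[simp]: "op_smult 1 T = T"
  by (intro blinfun_eqI ell2_eqI) (simp add: op_smult_def)

lemma op_smult_zero[simp]: "op_smult 0 T = 0"
  by (intro blinfun_eqI ell2_eqI) (simp add: op_smult_def)

lemma op_smult_minus_one: "op_smult (-1) T = - T"
  by (intro blinfun_eqI ell2_eqI) (simp add: op_smult_def blinfun.minus_left)

lemma op_smult_add_left: "op_smult (c + d) T = op_smult c T + op_smult d T"
  by (simp add: op_smult_def cscale_op_add blinfun_compose.add_left)

lemma op_smult_diff_left: "op_smult (c - d) T = op_smult c T - op_smult d T"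
  by (intro blinfun_eqI ell2_eqI) (simp add: op_smult_def blinfun.diff_left algebra_simps)

lemma op_smult_add_right: "op_smult c (T + U) = op_smult c T + op_smult c U"
  by (simp add: op_smult_def blinfun_compose.add_right)

lemma op_smult_sum_left: "op_smult (sum f F) T = (\<Sum>s\<in>F. op_smult (f s) T)"
  by (induction F rule: infinite_finite_induct) (auto simp: op_smult_add_left)

lemma op_smult_op_smult: "op_smult c (op_smult d T) = op_smult (c * d) T"
  by (simp add: op_smult_def cscale_op_compose flip: blinfun_compose_assoc)

lemma op_smult_compose_left: "op_smult c T o\<^sub>L U = op_smult c (T o\<^sub>L U)"
  by (simp add: op_smult_def blinfun_compose_assoc)

lemma op_smult_compose_right:
  "T \<in> adjointable \<Longrightarrow> T o\<^sub>L op_smult c U = op_smult c (T o\<^sub>L U)"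
  by (simp add: op_smult_def compose_cscale_op_commute flip: blinfun_compose_assoc)

lemma adjointable_op_smult: "T \<in> adjointable \<Longrightarrow> op_smult c T \<in> adjointable"
  by (simp add: op_smult_def adjointable_compose adjointable_cscale_op)

lemma op_adjoint_op_smult:
  "T \<in> adjointable \<Longrightarrow> op_adjoint (op_smult c T) = op_smult (cnj c) (op_adjoint T)"
  by (simp add: op_smult_def op_adjoint_compose adjointable_cscale_op op_adjoint_cscale_op
      compose_cscale_op_commute op_adjoint_adjointable)

lemma norm_op_smult: "norm (op_smult c T) = cmod c * norm T"
proof (cases "c = 0")
  case False
  have "norm (op_smult c T) \<le> cmod c * norm T"
    by (rule norm_blinfun_bound)
      (simp_all add: op_smult_def norm_cscale mult.assoc mult_left_mono norm_blinfun)
  moreover have "norm T \<le> norm (op_smult c T) / cmod c"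
  proof (rule norm_blinfun_bound)
    fix x
    have "cmod c * norm (T x) \<le> norm (op_smult c T) * norm x"
      using norm_blinfun[of "op_smult c T" x] by (simp add: op_smult_def norm_cscale)
    then show "norm (T x) \<le> norm (op_smult c T) / cmod c * norm x"
      using False by (simp add: field_simps)
  qed simp
  ultimately show ?thesis using False by (simp add: field_simps)
qed simp

lemma norm_le_norm_adjoint:
  assumes "is_adjoint T S"
  shows "norm T \<le> norm S"
proof (rule norm_blinfun_bound)
  fix x
  have "norm (T x) * norm (T x) = inner x (S (T x))"
    using assms power2_norm_eq_inner[of "T x"] by (simp add: is_adjoint_def power2_eq_square)
  also have "\<dots> \<le> norm x * norm (S (T x))"
    by (rule order_trans[OF abs_ge_self Cauchy_Schwarz_ineq2])
  also have "\<dots> \<le> (norm S * norm x) * norm (T x)"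
    using norm_blinfun[of S "T x"] by (simp add: mult_left_mono algebra_simps)
  finally show "norm (T x) \<le> norm S * norm x"
    by (cases "norm (T x) = 0") (simp_all add: mult_le_cancel_right)
qed simp

lemma norm_op_adjoint: "T \<in> adjointable \<Longrightarrow> norm (op_adjoint T) = norm T"
  by (meson is_adjoint_op_adjoint antisym is_adjoint_sym norm_le_norm_adjoint)

lemma norm_op_adjoint_compose_self:
  assumes "T \<in> adjointable"
  shows "norm (op_adjoint T o\<^sub>L T) = (norm T)\<^sup>2"
proof (rule antisym)
  show "norm (op_adjoint T o\<^sub>L T) \<le> (norm T)\<^sup>2"
    using norm_blinfun_compose[of "op_adjoint T" T] norm_op_adjoint[OF assms]
    by (simp add: power2_eq_square)
  have "norm T \<le> sqrt (norm (op_adjoint T o\<^sub>L T))"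
  proof (rule norm_blinfun_bound)
    fix x
    have "(norm (T x))\<^sup>2 = inner x ((op_adjoint T o\<^sub>L T) x)"
      using inner_op_adjoint[OF assms] by (simp add: power2_norm_eq_inner)
    also have "\<dots> \<le> norm x * norm ((op_adjoint T o\<^sub>L T) x)"
      by (rule order_trans[OF abs_ge_self Cauchy_Schwarz_ineq2])
    also have "\<dots> \<le> norm x * (norm (op_adjoint T o\<^sub>L T) * norm x)"
      by (intro mult_left_mono norm_blinfun norm_ge_zero)
    also have "\<dots> = (sqrt (norm (op_adjoint T o\<^sub>L T)) * norm x)\<^sup>2"
      by (simp add: power2_eq_square algebra_simps)
    finally show "norm (T x) \<le> sqrt (norm (op_adjoint T o\<^sub>L T)) * norm x"
      by (rule power2_le_imp_le) simp
  qed simp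
  then show "(norm T)\<^sup>2 \<le> norm (op_adjoint T o\<^sub>L T)"
    by (metis norm_ge_zero power_mono real_sqrt_pow2)
qed

text \<open>The adjoints of a convergent sequence form a Cauchy sequence, whose limit is the
  adjoint of the limit.\<close>
lemma adjointable_closed:
  assumes X: "\<And>n. X n \<in> adjointable" and lim: "X \<longlonglongrightarrow> L"
  shows "L \<in> adjointable"
proof -
  have "Cauchy (\<lambda>n. op_adjoint (X n))"
    using LIMSEQ_imp_Cauchy[OF lim] unfolding Cauchy_iff
    by (metis X op_adjoint_diff adjointable_diff norm_op_adjoint)
  then obtain S where S: "(\<lambda>n. op_adjoint (X n)) \<longlonglongrightarrow> S"
    by (auto simp: Cauchy_convergent_iff convergent_def)
  have apply_lim: "(\<lambda>n. X n x) \<longlonglongrightarrow> L x" "(\<lambda>n. op_adjoint (X n) x) \<longlonglongrightarrow> S x" for x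
    using blinfun.tendsto[OF lim tendsto_const] blinfun.tendsto[OF S tendsto_const] by auto
  have "complex_linear L" unfolding complex_linear_def
  proof (intro allI)
    fix c x
    have "(\<lambda>n. X n (cscale c x)) \<longlonglongrightarrow> cscale c (L x)"
      using bounded_linear.tendsto[OF bounded_linear_cscale apply_lim(1)]
      by (simp add: X adjointable_apply_cscale)
    then show "L (cscale c x) = cscale c (L x)" using apply_lim(1) LIMSEQ_unique by blast
  qed
  moreover have "is_adjoint L S" unfolding is_adjoint_def
  proof (intro allI)
    fix x y
    have "(\<lambda>n. inner (X n x) y) \<longlonglongrightarrow> inner (L x) y"
      by (intro tendsto_intros apply_lim)
    moreover have "(\<lambda>n. inner (X n x) y) \<longlonglongrightarrow> inner x (S y)"
      using X by (simp add: inner_op_adjoint) (intro tendsto_intros apply_lim)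
    ultimately show "inner (L x) y = inner x (S y)" using LIMSEQ_unique by blast
  qed
  ultimately show ?thesis unfolding adjointable_def by blast
qed

definition adjointable_cstar :: "ell2_op cstar" where
  "adjointable_cstar = \<lparr>cs_carrier = adjointable, cs_zero = 0, cs_add = (+),
     cs_smult = op_smult, cs_mult = (o\<^sub>L), cs_star = op_adjoint, cs_norm = norm\<rparr>"

lemma cs_dist_adjointable_cstar: "cs_dist adjointable_cstar S T = norm (S - T)"
  by (simp add: cs_dist_def adjointable_cstar_def op_smult_minus_one)

lemma cstar_algebra_adjointable_cstar: "cstar_algebra adjointable_cstar"
proof -
  have complete: "\<exists>L\<in>adjointable. (\<lambda>n. norm (X n - L)) \<longlonglongrightarrow> 0"
    if X: "\<forall>n. X n \<in> adjointable" and Cauchy: "\<forall>e>0. \<exists>N. \<forall>m\<ge>N. \<forall>n\<ge>N. norm (X m - X n) < e" for X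
  proof -
    have "Cauchy X" using Cauchy unfolding Cauchy_iff .
    then obtain L where L: "X \<longlonglongrightarrow> L"
      by (auto simp: Cauchy_convergent_iff convergent_def)
    have "L \<in> adjointable" by (rule adjointable_closed) (use X L in auto)
    then show ?thesis using tendsto_norm_zero[OF LIM_zero[OF L]] by blast
  qed
  have neg: "\<exists>y\<in>adjointable. x + y = 0" if "x \<in> adjointable" for x
    using adjointable_diff[OF adjointable_zero that] by (intro bexI[of _ "- x"]) simp_all
  show ?thesis
    unfolding cstar_algebra_def Let_def cs_dist_adjointable_cstar
    by (simp add: adjointable_cstar_def complete neg add.assoc add.commute
        adjointable_zero adjointable_add adjointable_compose adjointable_op_smult
        op_adjoint_adjointable
        op_smult_add_right op_smult_add_left op_smult_op_smult op_smult_compose_left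
        op_smult_compose_right blinfun_compose_assoc blinfun_compose.add_left
        blinfun_compose.add_right op_adjoint_op_adjoint op_adjoint_add op_adjoint_op_smult
        op_adjoint_compose norm_op_smult norm_triangle_ineq norm_blinfun_compose
        norm_op_adjoint_compose_self)
qed

text \<open>The C*-algebras of \<open>has_faithful_cstar_rep\<close> live on a fixed type; a C*-algebra on
  another type is carried over along an encoding \<open>e\<close> with left inverse \<open>d\<close> on the carrier.\<close>
definition cstar_transport :: "('b \<Rightarrow> 'x) \<Rightarrow> ('x \<Rightarrow> 'b) \<Rightarrow> 'b cstar \<Rightarrow> 'x cstar" where
  "cstar_transport e d B = \<lparr>cs_carrier = e ` cs_carrier B, cs_zero = e (cs_zero B),
     cs_add = (\<lambda>x y. e (cs_add B (d x) (d y))), cs_smult = (\<lambda>c x. e (cs_smult B c (d x))),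
     cs_mult = (\<lambda>x y. e (cs_mult B (d x) (d y))), cs_star = (\<lambda>x. e (cs_star B (d x))),
     cs_norm = (\<lambda>x. cs_norm B (d x))\<rparr>"

lemma cstar_transport_simps:
  "cs_carrier (cstar_transport e d B) = e ` cs_carrier B"
  "cs_zero (cstar_transport e d B) = e (cs_zero B)"
  "cs_add (cstar_transport e d B) x y = e (cs_add B (d x) (d y))"
  "cs_smult (cstar_transport e d B) c x = e (cs_smult B c (d x))"
  "cs_mult (cstar_transport e d B) x y = e (cs_mult B (d x) (d y))"
  "cs_star (cstar_transport e d B) x = e (cs_star B (d x))"
  "cs_norm (cstar_transport e d B) x = cs_norm B (d x)"
  by (simp_all add: cstar_transport_def)

lemma cstar_algebra_transport:
  assumes B: "cstar_algebra B" and inv: "\<And>x. x \<in> cs_carrier B \<Longrightarrow> d (e x) = x"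
  shows "cstar_algebra (cstar_transport e d B)"
proof -
  let ?A = "cstar_transport e d B" and ?C = "cs_carrier B"
  have closed: "cs_zero B \<in> ?C" "\<And>x y. x \<in> ?C \<Longrightarrow> y \<in> ?C \<Longrightarrow> cs_add B x y \<in> ?C"
    "\<And>x y. x \<in> ?C \<Longrightarrow> y \<in> ?C \<Longrightarrow> cs_mult B x y \<in> ?C"
    "\<And>c x. x \<in> ?C \<Longrightarrow> cs_smult B c x \<in> ?C" "\<And>x. x \<in> ?C \<Longrightarrow> cs_star B x \<in> ?C"
    using B unfolding cstar_algebra_def Let_def by auto
  have B_complete: "\<forall>X. (\<forall>n. X n \<in> ?C) \<and>
      (\<forall>e>0. \<exists>N. \<forall>m\<ge>N. \<forall>n\<ge>N. cs_dist B (X m) (X n) < e) \<longrightarrow>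
      (\<exists>L\<in>?C. (\<lambda>n. cs_dist B (X n) L) \<longlonglongrightarrow> 0)"
    using B unfolding cstar_algebra_def Let_def by (elim conjE) assumption
  have inj: "x \<in> ?C \<Longrightarrow> y \<in> ?C \<Longrightarrow> e x = e y \<longleftrightarrow> x = y" for x y
    by (metis inv)
  have dist: "cs_dist ?A (e x) (e y) = cs_dist B x y" if "x \<in> ?C" "y \<in> ?C" for x y
    using that by (simp add: cs_dist_def cstar_transport_simps inv closed)
  have complete: "\<exists>L\<in>?C. (\<lambda>n. cs_dist ?A (X n) (e L)) \<longlonglongrightarrow> 0"
    if X: "\<forall>n. X n \<in> e ` ?C" and Cauchy: "\<forall>\<epsilon>>0. \<exists>N. \<forall>m\<ge>N. \<forall>n\<ge>N. cs_dist ?A (X m) (X n) < \<epsilon>"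
    for X
  proof -
    define Y where "Y n = d (X n)" for n
    have Y: "Y n \<in> ?C" "X n = e (Y n)" for n
      using X[rule_format, of n] inv unfolding Y_def by auto
    have "\<forall>\<epsilon>>0. \<exists>N. \<forall>m\<ge>N. \<forall>n\<ge>N. cs_dist B (Y m) (Y n) < \<epsilon>"
      using Cauchy by (simp add: Y dist)
    then obtain L where "L \<in> ?C" "(\<lambda>n. cs_dist B (Y n) L) \<longlonglongrightarrow> 0"
      using B_complete Y(1) by blast
    then show ?thesis by (intro bexI[of _ L]) (simp_all add: Y dist)
  qed
  have "cstar_algebra ?A \<longleftrightarrow> cstar_algebra B"
    unfolding cstar_algebra_def Let_def
    by (simp add: cstar_transport_simps inv inj closed complete B_complete)
  with B show ?thesis by simp
qed

definition op_to_fun :: "ell2_op \<Rightarrow> cs_elem" where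
  "op_to_fun T = (\<lambda>v. Rep_ell2 (T (Abs_ell2 v)))"

definition fun_to_op :: "cs_elem \<Rightarrow> ell2_op" where
  "fun_to_op F = Blinfun (\<lambda>x. Abs_ell2 (F (Rep_ell2 x)))"

lemma fun_to_op_op_to_fun[simp]: "fun_to_op (op_to_fun T) = T"
  by (simp add: op_to_fun_def fun_to_op_def Rep_ell2_inverse blinfun_apply_inverse)

definition ops_cstar :: "cs_elem cstar" where
  "ops_cstar = cstar_transport op_to_fun fun_to_op adjointable_cstar"

lemma cstar_algebra_ops_cstar: "cstar_algebra ops_cstar"
  unfolding ops_cstar_def by (rule cstar_algebra_transport[OF cstar_algebra_adjointable_cstar]) simp

section \<open>Faithful representations from separated operator families\<close>

definition op_lin_ext :: "('a \<Rightarrow> ell2_op) \<Rightarrow> ('a \<Rightarrow> complex) \<Rightarrow> ell2_op" where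
  "op_lin_ext V f = (\<Sum>s\<in>{s. f s \<noteq> 0}. op_smult (f s) (V s))"

definition coordinate_separating :: "('a \<Rightarrow> ell2_op) \<Rightarrow> bool" where
  "coordinate_separating V \<longleftrightarrow> (\<forall>G. finite G \<longrightarrow> G \<noteq> {} \<longrightarrow>
     (\<exists>s0\<in>G. \<exists>x i. \<forall>s\<in>G. Rep_ell2 (V s x) i = (if s = s0 then 1 else 0)))"

lemma finite_support_salg_carrier: "f \<in> salg_carrier \<Longrightarrow> finite {s. f s \<noteq> 0}"
  by (simp add: salg_carrier_def)

lemma op_lin_ext_eq:
  assumes "finite F" "{s. f s \<noteq> 0} \<subseteq> F"
  shows "op_lin_ext V f = (\<Sum>s\<in>F. op_smult (f s) (V s))"
  unfolding op_lin_ext_def by (rule sum.mono_neutral_left) (use assms in auto)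

lemma adjointable_op_lin_ext: "(\<And>s. V s \<in> adjointable) \<Longrightarrow> op_lin_ext V f \<in> adjointable"
  unfolding op_lin_ext_def by (intro adjointable_sum adjointable_op_smult)

lemma op_lin_ext_add:
  assumes "f \<in> salg_carrier" "g \<in> salg_carrier"
  shows "op_lin_ext V (\<lambda>s. f s + g s) = op_lin_ext V f + op_lin_ext V g"
proof -
  let ?F = "{s. f s \<noteq> 0} \<union> {s. g s \<noteq> 0}"
  have "finite ?F" using assms by (simp add: finite_support_salg_carrier)
  then show ?thesis
    by (subst (1 2 3) op_lin_ext_eq[where F = ?F]) (auto simp: op_smult_add_left sum.distrib)
qed

lemma op_lin_ext_diff:
  assumes "f \<in> salg_carrier" "g \<in> salg_carrier"
  shows "op_lin_ext V (\<lambda>s. f s - g s) = op_lin_ext V f - op_lin_ext V g"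
proof -
  let ?F = "{s. f s \<noteq> 0} \<union> {s. g s \<noteq> 0}"
  have "finite ?F" using assms by (simp add: finite_support_salg_carrier)
  then show ?thesis
    by (subst (1 2 3) op_lin_ext_eq[where F = ?F]) (auto simp: op_smult_diff_left sum_subtractf)
qed

lemma op_lin_ext_smult:
  assumes "f \<in> salg_carrier"
  shows "op_lin_ext V (\<lambda>s. c * f s) = op_smult c (op_lin_ext V f)"
proof -
  have "op_lin_ext V (\<lambda>s. c * f s) = (\<Sum>s\<in>{s. f s \<noteq> 0}. op_smult (c * f s) (V s))"
    using assms by (intro op_lin_ext_eq) (auto simp: finite_support_salg_carrier)
  then show ?thesis
    by (simp add: op_lin_ext_def op_smult_def blinfun_compose.sum_right cscale_op_compose
        flip: blinfun_compose_assoc)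
qed

lemma op_lin_ext_mult:
  assumes V: "\<And>s. V s \<in> adjointable" and mult: "\<And>s t. V (mul s t) = V s o\<^sub>L V t"
    and f: "f \<in> salg_carrier" and g: "g \<in> salg_carrier"
  shows "op_lin_ext V (salg_mult mul f g) = op_lin_ext V f o\<^sub>L op_lin_ext V g"
proof -
  let ?Sf = "{s. f s \<noteq> 0}" and ?Sg = "{t. g t \<noteq> 0}"
  let ?Q = "?Sf \<times> ?Sg" and ?m = "\<lambda>p. mul (fst p) (snd p)"
  have fin: "finite ?Q" using f g by (simp add: finite_support_salg_carrier)
  have coeff: "salg_mult mul f g u = (\<Sum>p\<in>{p\<in>?Q. ?m p = u}. f (fst p) * g (snd p))" for u
    unfolding salg_mult_def by (rule sum.cong) auto
  have supp: "{u. salg_mult mul f g u \<noteq> 0} \<subseteq> ?m ` ?Q"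
  proof
    fix u assume "u \<in> {u. salg_mult mul f g u \<noteq> 0}"
    then have "{p\<in>?Q. ?m p = u} \<noteq> {}" using coeff[of u] by force
    then show "u \<in> ?m ` ?Q" by blast
  qed
  have "op_lin_ext V (salg_mult mul f g) = (\<Sum>u\<in>?m ` ?Q. op_smult (salg_mult mul f g u) (V u))"
    using fin supp by (intro op_lin_ext_eq) auto
  also have "\<dots> = (\<Sum>u\<in>?m ` ?Q. \<Sum>p\<in>{p\<in>?Q. ?m p = u}.
      op_smult (f (fst p) * g (snd p)) (V (?m p)))"
    by (intro sum.cong refl) (auto simp: coeff op_smult_sum_left intro!: sum.cong)
  also have "\<dots> = (\<Sum>p\<in>?Q. op_smult (f (fst p) * g (snd p)) (V (?m p)))"
    by (rule sum.group[OF fin finite_imageI[OF fin]]) auto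
  also have "\<dots> = (\<Sum>s\<in>?Sf. \<Sum>t\<in>?Sg. op_smult (f s) (V s) o\<^sub>L op_smult (g t) (V t))"
    by (simp add: sum.cartesian_product case_prod_beta mult op_smult_compose_left
        op_smult_compose_right op_smult_op_smult V)
  also have "\<dots> = op_lin_ext V f o\<^sub>L op_lin_ext V g"
    by (simp only: op_lin_ext_def blinfun_compose.sum_left) (simp only: blinfun_compose.sum_right)
  finally show ?thesis .
qed

lemma op_lin_ext_star:
  assumes V: "\<And>s. V s \<in> adjointable" and star: "\<And>s. V (invl s) = op_adjoint (V s)"
    and invl: "\<And>s. invl (invl s) = s"
  shows "op_lin_ext V (salg_star invl f) = op_adjoint (op_lin_ext V f)"
proof -
  have "inj invl" by (metis injI invl)
  moreover have "{s. salg_star invl f s \<noteq> 0} = invl ` {s. f s \<noteq> 0}"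
    by (auto simp: salg_star_def invl intro: image_eqI[where x = "invl _"])
  ultimately show ?thesis
    by (simp add: op_lin_ext_def salg_star_def sum.reindex inj_on_subset[of invl UNIV] invl star
        op_adjoint_sum op_adjoint_op_smult V adjointable_op_smult)
qed

lemma op_lin_ext_eq_0:
  assumes sep: "coordinate_separating V" and f: "f \<in> salg_carrier" and zero: "op_lin_ext V f = 0"
  shows "f = (\<lambda>_. 0)"
proof (rule ccontr)
  let ?G = "{s. f s \<noteq> 0}"
  assume "f \<noteq> (\<lambda>_. 0)"
  then have "finite ?G" "?G \<noteq> {}" using f by (auto simp: finite_support_salg_carrier)
  then obtain s0 x i where "s0 \<in> ?G"
    and coord: "\<And>s. s \<in> ?G \<Longrightarrow> Rep_ell2 (V s x) i = (if s = s0 then 1 else 0)"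
    using sep unfolding coordinate_separating_def by meson
  have "0 = Rep_ell2 (op_lin_ext V f x) i" by (simp add: zero)
  also have "\<dots> = (\<Sum>s\<in>?G. f s * (if s = s0 then 1 else 0))"
    by (simp add: op_lin_ext_def op_smult_def blinfun.sum_left Rep_ell2_sum coord)
  also have "\<dots> = f s0"
    using \<open>finite ?G\<close> \<open>s0 \<in> ?G\<close> by (simp add: if_distrib sum.delta cong: if_cong)
  finally show False using \<open>s0 \<in> ?G\<close> by simp
qed

lemma has_faithful_cstar_repI:
  fixes V :: "'a \<Rightarrow> ell2_op"
  assumes V: "\<And>s. V s \<in> adjointable" and mult: "\<And>s t. V (mul s t) = V s o\<^sub>L V t"
    and star: "\<And>s. V (invl s) = op_adjoint (V s)" and invl: "\<And>s. invl (invl s) = s"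
    and sep: "coordinate_separating V"
  shows "has_faithful_cstar_rep mul invl"
proof -
  let ?\<pi> = "\<lambda>f. op_to_fun (op_lin_ext V f)"
  have "star_hom_into mul invl ops_cstar ?\<pi>"
    unfolding star_hom_into_def ops_cstar_def adjointable_cstar_def
    by (simp add: cstar_transport_simps adjointable_op_lin_ext V op_lin_ext_add op_lin_ext_smult
        op_lin_ext_mult[where V = V, OF V mult]
        op_lin_ext_star[where V = V and invl = invl, OF V star invl])
  moreover have "inj_on ?\<pi> salg_carrier"
  proof (rule inj_onI)
    fix f g assume f: "f \<in> salg_carrier" and g: "g \<in> salg_carrier" and "?\<pi> f = ?\<pi> g"
    then have "op_lin_ext V f = op_lin_ext V g" by (metis fun_to_op_op_to_fun)
    then have "op_lin_ext V (\<lambda>s. f s - g s) = 0" using f g by (simp add: op_lin_ext_diff)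
    moreover have "finite ({s. f s \<noteq> 0} \<union> {s. g s \<noteq> 0})"
      using f g by (simp add: finite_support_salg_carrier)
    then have "(\<lambda>s. f s - g s) \<in> salg_carrier"
      unfolding salg_carrier_def mem_Collect_eq by (rule rev_finite_subset) auto
    ultimately have "(\<lambda>s. f s - g s) = (\<lambda>_. 0)" using op_lin_ext_eq_0[OF sep] by blast
    then show "f = g" by (simp add: fun_eq_iff)
  qed
  ultimately show ?thesis
    unfolding has_faithful_cstar_rep_def using cstar_algebra_ops_cstar by blast
qed

section \<open>Composition operators of partial injections\<close>

definition pullback :: "(nat \<rightharpoonup> nat) \<Rightarrow> (nat \<Rightarrow> complex) \<Rightarrow> nat \<Rightarrow> complex" where
  "pullback \<psi> v k = (case \<psi> k of None \<Rightarrow> 0 | Some j \<Rightarrow> v j)"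

definition comp_op :: "(nat \<rightharpoonup> nat) \<Rightarrow> ell2_op" where
  "comp_op \<psi> = Blinfun (\<lambda>x. Abs_ell2 (pullback \<psi> (Rep_ell2 x)))"

definition partial_inverses :: "(nat \<rightharpoonup> nat) \<Rightarrow> (nat \<rightharpoonup> nat) \<Rightarrow> bool" where
  "partial_inverses \<psi> \<rho> \<longleftrightarrow> (\<forall>k j. \<psi> k = Some j \<longleftrightarrow> \<rho> j = Some k)"

lemma sum_norm_sq_pullback_le:
  assumes "inj_on \<psi> (dom \<psi>)" "finite K"
  shows "(\<Sum>k\<in>K. (norm (pullback \<psi> (Rep_ell2 x) k))\<^sup>2) \<le> (norm x)\<^sup>2"
proof -
  let ?D = "K \<inter> dom \<psi>" and ?h = "\<lambda>k. the (\<psi> k)"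
  have "inj_on ?h ?D"
    using assms(1) by (auto simp: inj_on_def dom_def)
  have "(\<Sum>k\<in>K. (norm (pullback \<psi> (Rep_ell2 x) k))\<^sup>2) = (\<Sum>k\<in>?D. (norm (Rep_ell2 x (?h k)))\<^sup>2)"
    using assms(2) by (intro sum.mono_neutral_cong_right) (auto simp: pullback_def dom_def)
  also have "\<dots> = (\<Sum>j\<in>?h ` ?D. (norm (Rep_ell2 x j))\<^sup>2)"
    using \<open>inj_on ?h ?D\<close> by (simp add: sum.reindex)
  also have "\<dots> \<le> (norm x)\<^sup>2"
    using assms(2) by (intro sum_norm_sq_le_power2_norm) simp
  finally show ?thesis .
qed

lemma
  assumes "inj_on \<psi> (dom \<psi>)"
  shows Rep_ell2_Abs_pullback:
      "Rep_ell2 (Abs_ell2 (pullback \<psi> (Rep_ell2 x))) = pullback \<psi> (Rep_ell2 x)"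
    and norm_Abs_pullback_le: "norm (Abs_ell2 (pullback \<psi> (Rep_ell2 x))) \<le> norm x"
proof -
  have partial: "(\<Sum>k<K. (norm (pullback \<psi> (Rep_ell2 x) k))\<^sup>2) \<le> (norm x)\<^sup>2" for K
    using sum_norm_sq_pullback_le[OF assms] by simp
  have summable: "summable (\<lambda>k. (norm (pullback \<psi> (Rep_ell2 x) k))\<^sup>2)"
    by (rule summableI_nonneg_bounded[OF _ partial]) simp
  then show Rep: "Rep_ell2 (Abs_ell2 (pullback \<psi> (Rep_ell2 x))) = pullback \<psi> (Rep_ell2 x)"
    by (simp add: Abs_ell2_inverse)
  have "(norm (Abs_ell2 (pullback \<psi> (Rep_ell2 x))))\<^sup>2 \<le> (norm x)\<^sup>2"
    unfolding power2_norm_ell2[of "Abs_ell2 _"] Rep by (rule suminf_le_const[OF summable partial])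
  then show "norm (Abs_ell2 (pullback \<psi> (Rep_ell2 x))) \<le> norm x"
    by (rule power2_le_imp_le) simp
qed

lemma Rep_ell2_comp_op:
  assumes "inj_on \<psi> (dom \<psi>)"
  shows "Rep_ell2 (comp_op \<psi> x) = pullback \<psi> (Rep_ell2 x)"
proof -
  note Rep = Rep_ell2_Abs_pullback[OF assms]
  have "bounded_linear (\<lambda>x. Abs_ell2 (pullback \<psi> (Rep_ell2 x)))"
  proof (rule bounded_linear_intro[where K = 1])
    show "Abs_ell2 (pullback \<psi> (Rep_ell2 (x + y))) =
        Abs_ell2 (pullback \<psi> (Rep_ell2 x)) + Abs_ell2 (pullback \<psi> (Rep_ell2 y))" for x y
      by (rule ell2_eqI) (subst Rep, simp add: Rep pullback_def split: option.split)
    show "Abs_ell2 (pullback \<psi> (Rep_ell2 (r *\<^sub>R x))) =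
        r *\<^sub>R Abs_ell2 (pullback \<psi> (Rep_ell2 x))" for r x
      by (rule ell2_eqI) (subst Rep, simp add: Rep pullback_def split: option.split)
  qed (simp add: norm_Abs_pullback_le[OF assms])
  then show ?thesis
    by (simp add: comp_op_def bounded_linear_Blinfun_apply Rep_ell2_Abs_pullback[OF assms])
qed

lemma inj_on_dom_map_comp:
  assumes "inj_on \<psi> (dom \<psi>)" "inj_on \<rho> (dom \<rho>)"
  shows "inj_on (\<rho> \<circ>\<^sub>m \<psi>) (dom (\<rho> \<circ>\<^sub>m \<psi>))"
proof (rule inj_onI)
  fix k k' assume "k \<in> dom (\<rho> \<circ>\<^sub>m \<psi>)" "k' \<in> dom (\<rho> \<circ>\<^sub>m \<psi>)" "(\<rho> \<circ>\<^sub>m \<psi>) k = (\<rho> \<circ>\<^sub>m \<psi>) k'"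
  then obtain j j' where "\<psi> k = Some j" "\<psi> k' = Some j'" "\<rho> j = \<rho> j'" "j \<in> dom \<rho>" "j' \<in> dom \<rho>"
    by (auto simp: map_comp_def dom_def split: option.splits)
  then show "k = k'" using assms by (metis domI inj_on_def)
qed

lemma comp_op_compose:
  assumes "inj_on \<psi> (dom \<psi>)" "inj_on \<rho> (dom \<rho>)"
  shows "comp_op \<psi> o\<^sub>L comp_op \<rho> = comp_op (\<rho> \<circ>\<^sub>m \<psi>)"
  by (intro blinfun_eqI ell2_eqI)
    (simp add: Rep_ell2_comp_op assms inj_on_dom_map_comp,
     simp add: pullback_def map_comp_def split: option.split)

lemma partial_inverses_sym: "partial_inverses \<psi> \<rho> \<Longrightarrow> partial_inverses \<rho> \<psi>"
  unfolding partial_inverses_def by blast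

lemma partial_inverses_inj_on: "partial_inverses \<psi> \<rho> \<Longrightarrow> inj_on \<psi> (dom \<psi>)"
  unfolding partial_inverses_def by (intro inj_onI) (metis domD option.inject)

text \<open>The adjoint pairing is a sum over \<open>dom \<psi>\<close> on one side and over \<open>dom \<rho>\<close> on the
  other; the partial bijection \<open>\<psi>\<close> reindexes the one into the other.\<close>
lemma is_adjoint_comp_op:
  assumes inv: "partial_inverses \<psi> \<rho>"
  shows "is_adjoint (comp_op \<psi>) (comp_op \<rho>)"
  unfolding is_adjoint_def
proof (intro allI)
  fix x y
  have inj: "inj_on \<psi> (dom \<psi>)" "inj_on \<rho> (dom \<rho>)"
    using inv partial_inverses_sym partial_inverses_inj_on by blast+
  have \<psi>\<rho>: "\<psi> k = Some j \<Longrightarrow> \<rho> j = Some k" and \<rho>\<psi>: "\<rho> j = Some k \<Longrightarrow> \<psi> k = Some j" for k j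
    using inv unfolding partial_inverses_def by blast+
  let ?g = "\<lambda>k. inner (Rep_ell2 (comp_op \<psi> x) k) (Rep_ell2 y k)"
  let ?h = "\<lambda>j. inner (Rep_ell2 x j) (Rep_ell2 (comp_op \<rho> y) j)"
  have "(?h has_sum inner x (comp_op \<rho> y)) (dom \<rho>)"
    using has_sum_inner_ell2[of x "comp_op \<rho> y"]
    by (subst has_sum_cong_neutral[where T = UNIV and g = ?h])
      (auto simp: Rep_ell2_comp_op[OF inj(2)] pullback_def split: option.splits)
  then have "(?g has_sum inner x (comp_op \<rho> y)) (dom \<psi>)"
  proof (subst has_sum_reindex_bij_witness[where i = "\<lambda>j. the (\<rho> j)" and j = "\<lambda>k. the (\<psi> k)"
        and T = "dom \<rho>" and h = ?h and s' = "inner x (comp_op \<rho> y)"])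
    show "?h (the (\<psi> k)) = ?g k" if k: "k \<in> dom \<psi>" for k
    proof -
      obtain j where j: "\<psi> k = Some j" using k by auto
      then have "\<rho> j = Some k" by (rule \<psi>\<rho>)
      with j show ?thesis by (simp add: Rep_ell2_comp_op inj pullback_def inner_commute)
    qed
  qed (fastforce dest: \<psi>\<rho> \<rho>\<psi>)+
  then have "(?g has_sum inner x (comp_op \<rho> y)) UNIV"
    by (subst has_sum_cong_neutral[where T = UNIV and g = ?g, symmetric])
      (auto simp: Rep_ell2_comp_op[OF inj(1)] pullback_def split: option.splits)
  then show "inner (comp_op \<psi> x) y = inner x (comp_op \<rho> y)"
    using has_sum_inner_ell2 has_sum_unique by blast
qed

lemma adjointable_comp_op: "partial_inverses \<psi> \<rho> \<Longrightarrow> comp_op \<psi> \<in> adjointable"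
  unfolding adjointable_def complex_linear_def
  by (auto intro!: ell2_eqI is_adjoint_comp_op
      simp: Rep_ell2_comp_op partial_inverses_inj_on pullback_def split: option.split)

lemma op_adjoint_comp_op: "partial_inverses \<psi> \<rho> \<Longrightarrow> op_adjoint (comp_op \<psi>) = comp_op \<rho>"
  by (rule op_adjoint_eqI[OF is_adjoint_comp_op])

section \<open>The bicyclic monoid\<close>

text \<open>\<open>q\<^sup>m p\<^sup>n\<close> acts by \<open>e\<^sub>j \<mapsto> e\<^bsub>j - n + m\<^esub>\<close> for \<open>j \<ge> n\<close> and kills the other basis vectors:
  \<open>p\<close> is the backward and \<open>q\<close> the forward shift.\<close>
definition bc_shift :: "nat \<times> nat \<Rightarrow> nat \<rightharpoonup> nat" where
  "bc_shift s k = (if fst s \<le> k then Some (k - fst s + snd s) else None)"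

definition bc_op :: "nat \<times> nat \<Rightarrow> ell2_op" where
  "bc_op s = comp_op (bc_shift s)"

lemma partial_inverses_bc_shift: "partial_inverses (bc_shift s) (bc_shift (bc_star s))"
  by (cases s) (auto simp: partial_inverses_def bc_shift_def bc_star_def)

lemma bc_shift_bc_mult: "bc_shift (bc_mult s t) = bc_shift t \<circ>\<^sub>m bc_shift s"
  by (cases s, cases t) (auto simp: bc_shift_def bc_mult_def map_comp_def fun_eq_iff)

lemma bc_star_bc_star: "bc_star (bc_star s) = s"
  by (cases s) (simp add: bc_star_def)

lemma adjointable_bc_op: "bc_op s \<in> adjointable"
  unfolding bc_op_def by (rule adjointable_comp_op[OF partial_inverses_bc_shift])

lemma bc_op_bc_mult: "bc_op (bc_mult s t) = bc_op s o\<^sub>L bc_op t"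
  unfolding bc_op_def bc_shift_bc_mult
  by (simp add: comp_op_compose partial_inverses_inj_on[OF partial_inverses_bc_shift])

lemma bc_op_bc_star: "bc_op (bc_star s) = op_adjoint (bc_op s)"
  unfolding bc_op_def by (simp add: op_adjoint_comp_op[OF partial_inverses_bc_shift])

text \<open>Among finitely many \<open>q\<^sup>m p\<^sup>n\<close>, one with least \<open>m\<close> is the only one mapping
  \<open>e\<^sub>n\<close> to a vector with nonzero \<open>m\<close>-th coordinate.\<close>
lemma coordinate_separating_bc_op: "coordinate_separating bc_op"
  unfolding coordinate_separating_def
proof (intro allI impI)
  fix G :: "(nat \<times> nat) set" assume "finite G" "G \<noteq> {}"
  define m0 where "m0 = Min (fst ` G)"
  have "m0 \<in> fst ` G" unfolding m0_def using \<open>finite G\<close> \<open>G \<noteq> {}\<close> by simp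
  then obtain n0 where "(m0, n0) \<in> G" by force
  have "Rep_ell2 (bc_op s (ell2_basis n0)) m0 = (if s = (m0, n0) then 1 else 0)" if "s \<in> G" for s
  proof -
    have "m0 \<le> fst s" unfolding m0_def using \<open>finite G\<close> that by simp
    then show ?thesis
      by (cases s) (auto simp: bc_op_def bc_shift_def Rep_ell2_comp_op Rep_ell2_basis
          pullback_def partial_inverses_inj_on[OF partial_inverses_bc_shift])
  qed
  with \<open>(m0, n0) \<in> G\<close> show "\<exists>s0\<in>G. \<exists>x i. \<forall>s\<in>G. Rep_ell2 (bc_op s x) i = (if s = s0 then 1 else 0)"
    by blast
qed

theorem has_faithful_cstar_rep_bc: "has_faithful_cstar_rep bc_mult bc_star"
  by (rule has_faithful_cstar_repI[OF adjointable_bc_op bc_op_bc_mult bc_op_bc_star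
        bc_star_bc_star coordinate_separating_bc_op])

section \<open>The free monoid \<open>S\<^sub>\<infinity>\<close>\<close>

type_synonym letter = "nat \<times> bool"

definition letter_star :: "letter \<Rightarrow> letter" where
  "letter_star = (\<lambda>(n, b). (n, \<not> b))"

lemma letter_star_letter_star[simp]: "letter_star (letter_star a) = a"
  by (cases a) (simp add: letter_star_def)

lemma sinf_star_eq: "sinf_star u = rev (map letter_star u)"
  unfolding sinf_star_def letter_star_def by simp

text \<open>The full Fock space over the letters sits in \<open>\<ell>\<^sup>2(\<nat>)\<close> with the word \<open>w\<close> at
  coordinate \<open>to_nat w\<close>; as \<open>to_nat\<close> need not be onto, the maps below are undefined at
  coordinates outside its range.  Then \<open>comp_op (creation a)\<close> sends \<open>e\<^sub>w\<close> to \<open>e\<^bsub>a # w\<^esub>\<close> and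
  \<open>comp_op (annihilation a)\<close> sends \<open>e\<^bsub>a # w\<^esub>\<close> to \<open>e\<^sub>w\<close>.\<close>
definition creation :: "letter \<Rightarrow> nat \<rightharpoonup> nat" where
  "creation a k = (case (from_nat k :: letter list) of
      [] \<Rightarrow> None
    | b # w \<Rightarrow> if b = a \<and> to_nat (from_nat k :: letter list) = k then Some (to_nat w) else None)"

definition annihilation :: "letter \<Rightarrow> nat \<rightharpoonup> nat" where
  "annihilation a j = (if to_nat (from_nat j :: letter list) = j
     then Some (to_nat (a # (from_nat j :: letter list))) else None)"

lemma partial_inverses_creation: "partial_inverses (creation a) (annihilation a)"
  unfolding partial_inverses_def
proof (intro allI iffI)
  fix k j assume "creation a k = Some j"
  then obtain w where "(from_nat k :: letter list) = a # w" "to_nat (from_nat k :: letter list) = k"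
      "j = to_nat w"
    unfolding creation_def by (auto split: list.splits if_splits)
  then show "annihilation a j = Some k" unfolding annihilation_def by auto
next
  fix k j assume "annihilation a j = Some k"
  then have "to_nat (from_nat j :: letter list) = j" "k = to_nat (a # (from_nat j :: letter list))"
    unfolding annihilation_def by (auto split: if_splits)
  then show "creation a k = Some j" unfolding creation_def by simp
qed

lemma partial_inverses_annihilation: "partial_inverses (annihilation a) (creation a)"
  by (rule partial_inverses_sym[OF partial_inverses_creation])

text \<open>Pairing creation of \<open>a\<close> with annihilation of \<open>a\<^sup>*\<close> makes \<open>letter_op a\<^sup>*\<close> the adjoint
  of \<open>letter_op a\<close>.\<close>
definition letter_op :: "letter \<Rightarrow> ell2_op" where
  "letter_op a = comp_op (creation a) + comp_op (annihilation (letter_star a))"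

primrec word_op :: "letter list \<Rightarrow> ell2_op" where
  "word_op [] = id_blinfun"
| "word_op (a # w) = letter_op a o\<^sub>L word_op w"

lemma adjointable_letter_op: "letter_op a \<in> adjointable"
  unfolding letter_op_def
  by (intro adjointable_add adjointable_comp_op[OF partial_inverses_creation]
      adjointable_comp_op[OF partial_inverses_annihilation])

lemma op_adjoint_letter_op: "op_adjoint (letter_op a) = letter_op (letter_star a)"
  unfolding letter_op_def
  by (simp add: op_adjoint_add adjointable_comp_op[OF partial_inverses_creation]
      adjointable_comp_op[OF partial_inverses_annihilation]
      op_adjoint_comp_op[OF partial_inverses_creation]
      op_adjoint_comp_op[OF partial_inverses_annihilation] add.commute)

lemma adjointable_word_op: "word_op w \<in> adjointable"
  by (induction w) (simp_all add: adjointable_id adjointable_compose adjointable_letter_op)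

lemma word_op_append: "word_op (u @ v) = word_op u o\<^sub>L word_op v"
  by (induction u) (simp_all add: blinfun_compose_assoc)

lemma word_op_sinf_mult: "word_op (sinf_mult u v) = word_op u o\<^sub>L word_op v"
  by (simp add: sinf_mult_def word_op_append)

lemma word_op_sinf_star: "word_op (sinf_star u) = op_adjoint (word_op u)"
proof (induction u)
  case (Cons a u)
  have "word_op (sinf_star (a # u)) = op_adjoint (word_op u) o\<^sub>L op_adjoint (letter_op a)"
    by (simp add: sinf_star_eq word_op_append Cons[unfolded sinf_star_eq] op_adjoint_letter_op)
  then show ?case by (simp add: op_adjoint_compose adjointable_letter_op adjointable_word_op)
qed (simp add: sinf_star_def op_adjoint_id)

lemma sinf_star_sinf_star: "sinf_star (sinf_star u) = u"
  by (simp add: sinf_star_eq rev_map comp_def)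

definition vacuum :: ell2 where
  "vacuum = ell2_basis (to_nat ([] :: letter list))"

lemma Rep_ell2_letter_op:
  "Rep_ell2 (letter_op a y) (to_nat (v :: letter list)) =
     (case v of [] \<Rightarrow> 0 | b # v' \<Rightarrow> if b = a then Rep_ell2 y (to_nat v') else 0)
     + Rep_ell2 y (to_nat (letter_star a # v))"
  by (simp add: letter_op_def blinfun.add_left Rep_ell2_comp_op pullback_def creation_def
      annihilation_def partial_inverses_inj_on[OF partial_inverses_creation]
      partial_inverses_inj_on[OF partial_inverses_annihilation] split: list.split)

lemma Rep_ell2_word_op_vacuum:
  "length w \<le> length v \<Longrightarrow> Rep_ell2 (word_op w vacuum) (to_nat v) = (if v = w then 1 else 0)"
proof (induction w arbitrary: v)
  case Nil
  then show ?case by (simp add: vacuum_def Rep_ell2_basis)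
next
  case (Cons a w)
  then obtain b v' where v: "v = b # v'" by (cases v) auto
  have "Rep_ell2 (word_op (a # w) vacuum) (to_nat v) =
      (if b = a then Rep_ell2 (word_op w vacuum) (to_nat v') else 0)
      + Rep_ell2 (word_op w vacuum) (to_nat (letter_star a # v))"
    by (simp add: Rep_ell2_letter_op v)
  also have "\<dots> = (if b = a then (if v' = w then 1 else 0) else 0)
      + (if letter_star a # v = w then 1 else 0)"
    using Cons by (simp add: v)
  also have "\<dots> = (if v = a # w then 1 else 0)"
    using Cons.prems by (auto simp: v)
  finally show ?case .
qed

lemma coordinate_separating_word_op: "coordinate_separating word_op"
  unfolding coordinate_separating_def
proof (intro allI impI)
  fix G :: "letter list set" assume "finite G" "G \<noteq> {}"
  then have "Max (length ` G) \<in> length ` G" by simp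
  then obtain w0 where "w0 \<in> G" "length w0 = Max (length ` G)" by force
  then have longest: "length w \<le> length w0" if "w \<in> G" for w
    using \<open>finite G\<close> that by simp
  have "Rep_ell2 (word_op w vacuum) (to_nat w0) = (if w = w0 then 1 else 0)" if "w \<in> G" for w
    using Rep_ell2_word_op_vacuum[OF longest[OF that]] by auto
  with \<open>w0 \<in> G\<close> show "\<exists>s0\<in>G. \<exists>x i. \<forall>s\<in>G. Rep_ell2 (word_op s x) i = (if s = s0 then 1 else 0)"
    by blast
qed

theorem has_faithful_cstar_rep_sinf: "has_faithful_cstar_rep sinf_mult sinf_star"
  by (rule has_faithful_cstar_repI[OF adjointable_word_op word_op_sinf_mult word_op_sinf_star
        sinf_star_sinf_star coordinate_separating_word_op])

theorem lemma2p1: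
  shows "has_faithful_cstar_rep bc_mult bc_star \<and> has_faithful_cstar_rep sinf_mult sinf_star"
  using has_faithful_cstar_rep_bc has_faithful_cstar_rep_sinf by blast

end
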